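(* Let $T,B_1,B_3>0$, $C>0$ and $\varepsilon>0$. The function $H_\varepsilon:Y\times\mathbb{R}\times X_{B_1}\to\mathbb{R}$, $$H_\varepsilon(\tilde\theta,s,\gamma)=\int_{(0,T)^2}\Big(\Big|(A_\varepsilon\tilde\theta)_{t_2}(\gamma_{t_2})-(A_\varepsilon\tilde\theta)_{t_1}(\gamma_{t_1})-\big(\Theta(s,\gamma_{t_2},t_2)-\Theta(s,\gamma_{t_1},t_1)\big)^+\Big|-C(t_2-t_1)\Big)^+\chi_{\{t_1<t_2\}}\,dt_1dt_2,$$ is continuous.
   Context: $Q^{sat}:\mathbb{R}^3\to\mathbb{R}$ is smooth with $\partial_\theta Q^{sat}>0$, $\partial_zQ^{sat}<0$; $\Theta(w,z,t)$ is the solution $\theta$ of $\theta+Q^{sat}(\theta,z,t)=w$ (assumed well defined), smooth. $X_{B_1}$: left-continuous $\gamma:(0,T)\to[0,1]$ with total variation $\le B_1$, metric $\|\cdot\|_{L^2(0,T)}$; $\gamma_t=\gamma(t)$. $Y_{B_3}$: nondecreasing $\theta:[0,1]\to\mathbb{R}$, right-continuous on $[0,1)$, $|\theta|\le B_3$, metric $L^2(0,1)$. $Y=C([0,T);Y_{B_3})$ with sup-in-time metric. $(A_\varepsilon\tilde\theta)_t(z)=\varepsilon^{-1}\int_z^{z+\varepsilon}\tilde\theta_t(w)\,dw$, with $\tilde\theta_t(w)=B_3$ for $w\ge1$. *)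

theory Defs
  imports "HOL-Analysis.Analysis"
begin

coinductive smooth_fn :: "('a::euclidean_space \<Rightarrow> real) \<Rightarrow> bool" where
  "(\<forall>x. f differentiable (at x)) \<Longrightarrow>
   (\<forall>b\<in>Basis. smooth_fn (\<lambda>x. frechet_derivative f (at x) b)) \<Longrightarrow> smooth_fn f"

definition variation_le :: "real set \<Rightarrow> (real \<Rightarrow> real) \<Rightarrow> real \<Rightarrow> bool" where
  "variation_le S g B \<longleftrightarrow>
     (\<forall>(n::nat) (p::nat \<Rightarrow> real). (\<forall>i\<le>n. p i \<in> S) \<and> (\<forall>i<n. p i < p (Suc i)) \<longrightarrow>
        (\<Sum>i<n. \<bar>g (p (Suc i)) - g (p i)\<bar>) \<le> B)"

definition X_B1 :: "real \<Rightarrow> real \<Rightarrow> (real \<Rightarrow> real) set" where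
  "X_B1 T B1 = {g. (\<forall>t\<in>{0<..<T}. (g \<longlongrightarrow> g t) (at_left t))
                 \<and> (\<forall>t\<in>{0<..<T}. 0 \<le> g t \<and> g t \<le> 1)
                 \<and> variation_le {0<..<T} g B1}"

definition L2dist_X :: "real \<Rightarrow> (real \<Rightarrow> real) \<Rightarrow> (real \<Rightarrow> real) \<Rightarrow> real" where
  "L2dist_X T g h = sqrt (integral {0<..<T} (\<lambda>t. (g t - h t)\<^sup>2))"

definition Y_B3 :: "real \<Rightarrow> (real \<Rightarrow> real) set" where
  "Y_B3 B3 = {f. mono_on {0..1} f
               \<and> (\<forall>z\<in>{0..<1}. (f \<longlongrightarrow> f z) (at_right z))
               \<and> (\<forall>z\<in>{0..1}. \<bar>f z\<bar> \<le> B3)}"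

definition L2dist_01 :: "(real \<Rightarrow> real) \<Rightarrow> (real \<Rightarrow> real) \<Rightarrow> real" where
  "L2dist_01 f g = sqrt (integral {0<..<1} (\<lambda>z. (f z - g z)\<^sup>2))"

definition Y_sp :: "real \<Rightarrow> real \<Rightarrow> (real \<Rightarrow> real \<Rightarrow> real) set" where
  "Y_sp T B3 = {th. (\<forall>t\<in>{0..<T}. th t \<in> Y_B3 B3)
     \<and> (\<forall>t\<in>{0..<T}. \<forall>e>0. \<exists>d>0. \<forall>t'\<in>{0..<T}.
           \<bar>t' - t\<bar> < d \<longrightarrow> L2dist_01 (th t') (th t) < e)}"

definition dist_Y :: "real \<Rightarrow> (real \<Rightarrow> real \<Rightarrow> real) \<Rightarrow> (real \<Rightarrow> real \<Rightarrow> real) \<Rightarrow> real" where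
  "dist_Y T th1 th2 = (SUP t\<in>{0..<T}. L2dist_01 (th1 t) (th2 t))"

definition A_eps :: "real \<Rightarrow> real \<Rightarrow> (real \<Rightarrow> real \<Rightarrow> real) \<Rightarrow> real \<Rightarrow> real \<Rightarrow> real" where
  "A_eps B3 \<epsilon> th t z = (1 / \<epsilon>) * integral {z..z+\<epsilon>} (\<lambda>w. if 1 \<le> w then B3 else th t w)"

definition H_eps :: "real \<Rightarrow> real \<Rightarrow> real \<Rightarrow> real \<Rightarrow> (real \<Rightarrow> real \<Rightarrow> real \<Rightarrow> real)
     \<Rightarrow> (real \<Rightarrow> real \<Rightarrow> real) \<Rightarrow> real \<Rightarrow> (real \<Rightarrow> real) \<Rightarrow> real" where
  "H_eps T B3 C \<epsilon> Th th s g =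
     integral ({0<..<T} \<times> {0<..<T})
       (\<lambda>(t1, t2). if t1 < t2 then
          max 0 (\<bar>A_eps B3 \<epsilon> th t2 (g t2) - A_eps B3 \<epsilon> th t1 (g t1)
                   - max 0 (Th s (g t2) t2 - Th s (g t1) t1)\<bar> - C * (t2 - t1))
        else 0)"

end

theory Submission
  imports Defs
begin

(* Write a t = (A_eps th)_t(g t) and b t = Th(s, g t, t). The integrand of H_eps is 1-Lipschitz in the
   four numbers a t1, a t2, b t1, b t2, so |H_eps' - H_eps| is at most 2T times the L1 distance of the
   paths (a, b) and (a', b'). Averaging over a window of width eps makes A_eps th Lipschitz in z with
   constant 2 B3 / eps and 1/eps-Lipschitz in th for the L2 metric; Th is uniformly continuous on a
   compact box. Hence the paths are uniformly close wherever |g' t - g t| < delta, while the remaining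
   set has measure at most (L2dist_X g' g / delta)^2 by Chebyshev's inequality and the paths are
   bounded there. *)

definition extend_above_one :: "real \<Rightarrow> (real \<Rightarrow> real) \<Rightarrow> real \<Rightarrow> real" where
  "extend_above_one B f w = (if 1 \<le> w then B else f w)"

lemma A_eps_eq_integral_extend:
  "A_eps B e th t z = (1 / e) * integral {z..z+e} (extend_above_one B (th t))"
  unfolding A_eps_def extend_above_one_def by simp

lemma Y_B3D:
  assumes "f \<in> Y_B3 B"
  shows "mono_on {0..1} f" "\<And>z. z \<in> {0..1} \<Longrightarrow> \<bar>f z\<bar> \<le> B"
  using assms unfolding Y_B3_def by auto

lemma mono_on_extend_above_one:
  assumes "f \<in> Y_B3 B" "0 \<le> a"
  shows "mono_on {a..b} (extend_above_one B f)"
proof (rule mono_onI)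
  fix x y assume xy: "x \<in> {a..b}" "y \<in> {a..b}" "x \<le> y"
  show "extend_above_one B f x \<le> extend_above_one B f y"
  proof (cases "1 \<le> y")
    case True
    then show ?thesis using Y_B3D(2)[OF assms(1), of x] xy assms(2) by (auto simp: extend_above_one_def)
  next
    case False
    then show ?thesis using Y_B3D(1)[OF assms(1)] xy assms(2) by (auto simp: extend_above_one_def mono_on_def)
  qed
qed

lemma abs_extend_above_one_le:
  assumes "f \<in> Y_B3 B" "0 \<le> w"
  shows "\<bar>extend_above_one B f w\<bar> \<le> B"
  using Y_B3D(2)[OF assms(1), of w] Y_B3D(2)[OF assms(1), of 0] assms(2)
  by (auto simp: extend_above_one_def)

lemma extend_above_one_integrable:
  assumes "f \<in> Y_B3 B" "0 \<le> a"
  shows "extend_above_one B f integrable_on {a..b}"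
  by (rule integrable_on_mono_on[OF mono_on_extend_above_one[OF assms]])

lemma integral_extend_above_one_combine:
  assumes "f \<in> Y_B3 B" "0 \<le> a" "a \<le> b" "b \<le> c"
  shows "integral {a..c} (extend_above_one B f) - integral {a..b} (extend_above_one B f)
           = integral {b..c} (extend_above_one B f)"
  using Henstock_Kurzweil_Integration.integral_combine[OF assms(3,4) extend_above_one_integrable[OF assms(1,2)]] by simp

lemma abs_integral_extend_above_one_le:
  assumes "f \<in> Y_B3 B" "0 \<le> x" "x \<le> y"
  shows "\<bar>integral {x..y} (extend_above_one B f)\<bar> \<le> B * (y - x)"
proof -
  have "norm (integral {x..y} (extend_above_one B f)) \<le> integral {x..y} (\<lambda>_. B)"
    by (rule integral_norm_bound_integral)
      (use extend_above_one_integrable[OF assms(1,2)] abs_extend_above_one_le[OF assms(1)] assms in auto)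
  then show ?thesis using assms by (simp add: mult.commute)
qed

lemma abs_A_eps_le:
  assumes "th t \<in> Y_B3 B" "0 \<le> z" "e > 0"
  shows "\<bar>A_eps B e th t z\<bar> \<le> B"
  using abs_integral_extend_above_one_le[OF assms(1,2), of "z + e"] assms(3)
  by (simp add: A_eps_eq_integral_extend abs_mult field_simps)

lemma A_eps_lipschitz:
  assumes f: "th t \<in> Y_B3 B" and "0 \<le> z" "0 \<le> z'" and e: "e > 0"
  shows "\<bar>A_eps B e th t z' - A_eps B e th t z\<bar> \<le> 2 * B * \<bar>z' - z\<bar> / e"
proof -
  let ?I = "\<lambda>a b. integral {a..b} (extend_above_one B (th t))"
  have ordered: "\<bar>?I y (y + e) - ?I x (x + e)\<bar> \<le> 2 * B * (y - x)" if "0 \<le> x" "x \<le> y" for x y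
  proof (cases "y \<le> x + e")
    case True
    \<comment> \<open>overlapping windows differ by two pieces of length y - x\<close>
    have "?I y (y + e) - ?I x (x + e) = ?I (x + e) (y + e) - ?I x y"
      using integral_extend_above_one_combine[OF f, of x y "y + e"]
        integral_extend_above_one_combine[OF f, of y "x + e" "y + e"]
        integral_extend_above_one_combine[OF f, of x y "x + e"] that e True by simp
    then show ?thesis
      using abs_integral_extend_above_one_le[OF f, of "x + e" "y + e"]
        abs_integral_extend_above_one_le[OF f, of x y] that e by simp
  next
    case False
    have "0 \<le> B" using Y_B3D(2)[OF f, of 0] by simp
    then have "B * e \<le> B * (y - x)" using False by (intro mult_left_mono) auto
    then show ?thesis
      using abs_integral_extend_above_one_le[OF f, of y "y + e"]
        abs_integral_extend_above_one_le[OF f, of x "x + e"] that e by simp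
  qed
  have "\<bar>?I z' (z' + e) - ?I z (z + e)\<bar> \<le> 2 * B * \<bar>z' - z\<bar>"
    using ordered[of z z'] ordered[of z' z] assms by (cases "z \<le> z'") (auto simp: abs_minus_commute)
  then show ?thesis using e
    by (simp add: A_eps_eq_integral_extend right_diff_distrib[symmetric] abs_mult divide_simps mult.commute)
qed

lemma Y_B3_measurable:
  assumes "f \<in> Y_B3 B"
  shows "f \<in> borel_measurable (lebesgue_on {0..1})"
  using borel_measurable_integrable integrable_mono_on Y_B3D(1)[OF assms] by blast

lemma bounded_measurable_integrable_on:
  fixes f :: "real \<Rightarrow> real"
  assumes "f \<in> borel_measurable (lebesgue_on {a..b})" "\<And>x. x \<in> {a..b} \<Longrightarrow> \<bar>f x\<bar> \<le> K"
  shows "f integrable_on {a..b}"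
  by (rule measurable_bounded_by_integrable_imp_integrable_real[OF assms(1) _ assms(2)]) auto

lemma L2dist_01:
  assumes "f \<in> Y_B3 B" "h \<in> Y_B3 B"
  shows "(\<lambda>w. (f w - h w)\<^sup>2) integrable_on {0..1}"
    and "integral {0..1} (\<lambda>w. (f w - h w)\<^sup>2) = (L2dist_01 f h)\<^sup>2"
    and "0 \<le> L2dist_01 f h"
    and "L2dist_01 f h \<le> 2 * B"
proof -
  have bd: "\<bar>(f w - h w)\<^sup>2\<bar> \<le> (2 * B)\<^sup>2" if "w \<in> {0..1}" for w
  proof -
    have "\<bar>f w - h w\<bar> \<le> 2 * B" using Y_B3D(2)[OF assms(1) that] Y_B3D(2)[OF assms(2) that] by linarith
    then show ?thesis using power_mono[of "\<bar>f w - h w\<bar>" "2 * B" 2] by simp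
  qed
  show i: "(\<lambda>w. (f w - h w)\<^sup>2) integrable_on {0..1}"
    by (rule bounded_measurable_integrable_on[OF _ bd])
      (use Y_B3_measurable[OF assms(1)] Y_B3_measurable[OF assms(2)] in measurable)
  have nn: "0 \<le> integral {0..1} (\<lambda>w. (f w - h w)\<^sup>2)" by (rule integral_nonneg[OF i]) auto
  then show sq: "integral {0..1} (\<lambda>w. (f w - h w)\<^sup>2) = (L2dist_01 f h)\<^sup>2"
    and "0 \<le> L2dist_01 f h"
    unfolding L2dist_01_def by (simp_all add: integral_open_interval_real)
  have "integral {0..1} (\<lambda>w. (f w - h w)\<^sup>2) \<le> integral {0..1} (\<lambda>w::real. (2 * B)\<^sup>2)"
    by (rule Henstock_Kurzweil_Integration.integral_le[OF i integrable_const_ivl]) (use bd in force)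
  then have sq_le: "(L2dist_01 f h)\<^sup>2 \<le> (2 * B)\<^sup>2" using sq by simp
  have "0 \<le> B" using Y_B3D(2)[OF assms(1), of 0] by simp
  then show "L2dist_01 f h \<le> 2 * B" using power2_le_imp_le[OF sq_le] by simp
qed

lemma integral_abs_diff_le_L2dist_01:
  assumes f: "f \<in> Y_B3 B" and h: "h \<in> Y_B3 B"
  shows "(\<lambda>w. \<bar>f w - h w\<bar>) integrable_on {0..1}"
    and "integral {0..1} (\<lambda>w. \<bar>f w - h w\<bar>) \<le> L2dist_01 f h"
proof -
  let ?sq = "\<lambda>w. (f w - h w)\<^sup>2"
  show i: "(\<lambda>w. \<bar>f w - h w\<bar>) integrable_on {0..1}"
  proof (rule bounded_measurable_integrable_on[where K = "2 * B"])
    show "(\<lambda>w. \<bar>f w - h w\<bar>) \<in> borel_measurable (lebesgue_on {0..1})"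
      using Y_B3_measurable[OF f] Y_B3_measurable[OF h] by measurable
    show "\<bar>\<bar>f w - h w\<bar>\<bar> \<le> 2 * B" if "w \<in> {0..1}" for w
      using Y_B3D(2)[OF f that] Y_B3D(2)[OF h that] by linarith
  qed
  show "integral {0..1} (\<lambda>w. \<bar>f w - h w\<bar>) \<le> L2dist_01 f h"
  proof (rule dense_ge)
    fix c assume c: "L2dist_01 f h < c"
    then have c0: "0 < c" using L2dist_01(3)[OF f h] by linarith
    have amgm: "\<bar>x\<bar> \<le> x\<^sup>2 / (2 * c) + c / 2" for x :: real
    proof -
      have "2 * c * \<bar>x\<bar> \<le> x\<^sup>2 + c\<^sup>2" using zero_le_power2[of "\<bar>x\<bar> - c"] by (simp add: power2_eq_square algebra_simps)
      then show ?thesis using c0 by (simp add: field_simps power2_eq_square)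
    qed
    have "integral {0..1} (\<lambda>w. \<bar>f w - h w\<bar>) \<le> integral {0..1} (\<lambda>w. ?sq w / (2 * c) + c / 2)"
      by (rule Henstock_Kurzweil_Integration.integral_le[OF i])
        (use integrable_add[OF integrable_on_divide[OF L2dist_01(1)[OF f h]] integrable_const_ivl] amgm in auto)
    also have "\<dots> = (L2dist_01 f h)\<^sup>2 / (2 * c) + c / 2"
    proof -
      have "integral {0..1} (\<lambda>w. ?sq w / (2 * c)) = integral {0..1} ?sq / (2 * c)"
        by (rule integral_unique[OF has_integral_divide[OF integrable_integral[OF L2dist_01(1)[OF f h]]]])
      then show ?thesis
        using integral_add[OF integrable_on_divide[OF L2dist_01(1)[OF f h], of "2 * c"] integrable_const_ivl[of "c / 2" 0 1]]
          L2dist_01(2)[OF f h] by simp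
    qed
    also have "\<dots> \<le> c"
    proof -
      have "(L2dist_01 f h)\<^sup>2 \<le> c\<^sup>2" using c L2dist_01(3)[OF f h] by (intro power_mono) auto
      then show ?thesis using c0 by (simp add: field_simps power2_eq_square)
    qed
    finally show "integral {0..1} (\<lambda>w. \<bar>f w - h w\<bar>) \<le> c" .
  qed
qed

lemma A_eps_L2_lipschitz:
  assumes f: "th' t' \<in> Y_B3 B" and h: "th t \<in> Y_B3 B" and z: "0 \<le> z" and e: "e > 0"
  shows "\<bar>A_eps B e th' t' z - A_eps B e th t z\<bar> \<le> L2dist_01 (th' t') (th t) / e"
proof -
  let ?k = "\<lambda>w. \<bar>extend_above_one B (th' t') w - extend_above_one B (th t) w\<bar>"
  have k_int: "?k integrable_on {a..b}" if a: "0 \<le> a" for a b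
  proof (rule bounded_measurable_integrable_on[where K = "2 * B"])
    have "extend_above_one B (th' t') \<in> borel_measurable (lebesgue_on {a..b})"
      "extend_above_one B (th t) \<in> borel_measurable (lebesgue_on {a..b})"
      by (auto intro: integrable_imp_measurable_weak extend_above_one_integrable[OF f a]
          extend_above_one_integrable[OF h a])
    then show "?k \<in> borel_measurable (lebesgue_on {a..b})" by measurable
    show "\<bar>?k w\<bar> \<le> 2 * B" if "w \<in> {a..b}" for w
      using abs_extend_above_one_le[OF f, of w] abs_extend_above_one_le[OF h, of w] a that by auto
  qed
  have int_f: "extend_above_one B (th' t') integrable_on {z..z+e}"
    and int_h: "extend_above_one B (th t) integrable_on {z..z+e}"
    using extend_above_one_integrable[OF f z] extend_above_one_integrable[OF h z] by auto
  have "\<bar>integral {z..z+e} (extend_above_one B (th' t')) - integral {z..z+e} (extend_above_one B (th t))\<bar>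
      \<le> integral {z..z+e} ?k"
    using integral_diff[OF int_f int_h] integral_norm_bound_integral[OF integrable_diff[OF int_f int_h] k_int[OF z]]
    by simp
  also have "\<dots> \<le> integral {0..z+e+1} ?k"
    by (rule integral_subset_le) (use z e k_int in auto)
  also have "\<dots> = integral {0..1} ?k + integral {1..z+e+1} ?k"
    using Henstock_Kurzweil_Integration.integral_combine[of 0 1 "z+e+1" ?k] k_int[of 0] z e by auto
  also have "integral {1..z+e+1} ?k = 0"
    using integral_cong[of "{1..z+e+1}" ?k "\<lambda>_. 0"] by (simp add: extend_above_one_def)
  also have "integral {0..1} ?k \<le> integral {0..1} (\<lambda>w. \<bar>th' t' w - th t w\<bar>)"
    by (rule Henstock_Kurzweil_Integration.integral_le[OF k_int integral_abs_diff_le_L2dist_01(1)[OF f h]])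
      (auto simp: extend_above_one_def)
  also have "\<dots> \<le> L2dist_01 (th' t') (th t)"
    by (rule integral_abs_diff_le_L2dist_01(2)[OF f h])
  finally show ?thesis using e
    by (simp add: A_eps_eq_integral_extend right_diff_distrib[symmetric] abs_mult divide_simps mult.commute)
qed

lemma abs_A_eps_diff_le:
  assumes f: "th' t' \<in> Y_B3 B" and h: "th t \<in> Y_B3 B" and "0 \<le> z" "0 \<le> z'" and e: "e > 0"
  shows "\<bar>A_eps B e th' t' z' - A_eps B e th t z\<bar> \<le> (L2dist_01 (th' t') (th t) + 2 * B * \<bar>z' - z\<bar>) / e"
proof -
  have "\<bar>A_eps B e th' t' z' - A_eps B e th t z'\<bar> \<le> L2dist_01 (th' t') (th t) / e"
    by (rule A_eps_L2_lipschitz) (use assms in auto)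
  moreover have "\<bar>A_eps B e th t z' - A_eps B e th t z\<bar> \<le> 2 * B * \<bar>z' - z\<bar> / e"
    by (rule A_eps_lipschitz) (use assms in auto)
  ultimately show ?thesis unfolding add_divide_distrib by linarith
qed

lemma X_B1D:
  assumes "g \<in> X_B1 T B1" "t \<in> {0<..<T}"
  shows "(g \<longlongrightarrow> g t) (at_left t)" "0 \<le> g t" "g t \<le> 1"
  using assms unfolding X_B1_def by auto

lemma Y_spD:
  assumes "th \<in> Y_sp T B" "t \<in> {0..<T}"
  shows "th t \<in> Y_B3 B"
    and "\<And>e. e > 0 \<Longrightarrow> \<exists>d>0. \<forall>t'\<in>{0..<T}. \<bar>t' - t\<bar> < d \<longrightarrow> L2dist_01 (th t') (th t) < e"
  using assms unfolding Y_sp_def by auto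

lemma L2dist_01_le_dist_Y:
  assumes "th' \<in> Y_sp T B" "th \<in> Y_sp T B" "t \<in> {0..<T}"
  shows "L2dist_01 (th' t) (th t) \<le> dist_Y T th' th"
  unfolding dist_Y_def
proof (rule cSUP_upper[OF assms(3)])
  show "bdd_above ((\<lambda>t. L2dist_01 (th' t) (th t)) ` {0..<T})"
    using L2dist_01(4)[OF Y_spD(1)[OF assms(1)] Y_spD(1)[OF assms(2)]] by (intro bdd_aboveI2) auto
qed

lemma smooth_fn_continuous: "smooth_fn f \<Longrightarrow> continuous_on UNIV f"
  by (cases rule: smooth_fn.cases)
    (auto intro!: continuous_at_imp_continuous_on differentiable_imp_continuous_within)

text \<open>Sampling \<open>g\<close> at the grid point of mesh \<open>1/(n+1)\<close> strictly left of \<open>t\<close> gives Borel step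
  functions that converge to \<open>g\<close> on \<open>S\<close> by left-continuity.\<close>

lemma left_continuous_restrict_measurable:
  fixes g :: "real \<Rightarrow> real"
  assumes S: "S \<in> sets borel" and g: "\<And>t. t \<in> S \<Longrightarrow> (g \<longlongrightarrow> g t) (at_left t)"
  shows "(\<lambda>t. if t \<in> S then g t else 0) \<in> borel_measurable borel"
proof -
  define p where "p n t = (real_of_int \<lceil>real (Suc n) * t\<rceil> - 1) / real (Suc n)" for n and t :: real
  have p_bounds: "t - 1 / real (Suc n) \<le> p n t" "p n t < t" for n t
  proof -
    define m where "m = real (Suc n)"
    have m: "m > 0" by (simp add: m_def)
    have "m * t \<le> real_of_int \<lceil>m * t\<rceil>" "real_of_int \<lceil>m * t\<rceil> < m * t + 1"
      using le_of_int_ceiling[of "m * t"] ceiling_correct[of "m * t"] by linarith+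
    then show "t - 1 / real (Suc n) \<le> p n t" "p n t < t"
      using m unfolding p_def m_def[symmetric] by (simp_all add: field_simps)
  qed
  have step_measurable: "(\<lambda>t. if t \<in> S then g (p n t) else 0) \<in> borel_measurable borel" for n
  proof -
    have "(\<lambda>t. (\<lambda>(i::int) t. g ((real_of_int i - 1) / real (Suc n))) \<lceil>real (Suc n) * t\<rceil> t)
        \<in> borel_measurable borel"
      by (rule measurable_compose_countable) measurable
    then show ?thesis using S unfolding p_def by measurable
  qed
  show ?thesis
  proof (rule borel_measurable_LIMSEQ_real[OF _ step_measurable])
    fix t
    show "(\<lambda>n. if t \<in> S then g (p n t) else 0) \<longlonglongrightarrow> (if t \<in> S then g t else 0)"
    proof (cases "t \<in> S")
      case True
      have "(\<lambda>n. p n t) \<longlonglongrightarrow> t"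
      proof (rule tendsto_sandwich[of "\<lambda>n. t - 1 / real (Suc n)" _ _ "\<lambda>n. t"])
        show "(\<lambda>n. t - 1 / real (Suc n)) \<longlonglongrightarrow> t"
          using tendsto_diff[OF tendsto_const[of t] LIMSEQ_inverse_real_of_nat] by (simp add: divide_inverse)
      qed (use p_bounds[where t = t] in \<open>auto intro!: always_eventually less_imp_le\<close>)
      then have "filterlim (\<lambda>n. p n t) (at_left t) sequentially"
        unfolding filterlim_at using p_bounds by (auto intro!: always_eventually less_imp_neq)
      from filterlim_compose[OF g[OF True] this] show ?thesis using True by simp
    qed simp
  qed
qed

lemma X_B1_restrict_measurable:
  assumes "g \<in> X_B1 T B1"
  shows "(\<lambda>t. if t \<in> {0<..<T} then g t else 0) \<in> borel_measurable borel"
  using left_continuous_restrict_measurable[of "{0<..<T}" g] X_B1D(1)[OF assms] by simp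

lemma A_eps_clamped_continuous_on:
  assumes th: "th \<in> Y_sp T B" and e: "e > 0"
  shows "continuous_on ({0<..<T} \<times> UNIV) (\<lambda>(t, z). A_eps B e th t (max 0 (min 1 z)))"
  unfolding continuous_on_iff
proof (intro ballI allI impI)
  fix x :: "real \<times> real" and r :: real
  assume x: "x \<in> {0<..<T} \<times> UNIV" and r: "0 < r"
  obtain t0 z0 where x_eq: "x = (t0, z0)" and t0: "t0 \<in> {0..<T}" using x by fastforce
  have B: "0 \<le> B" using Y_B3D(2)[OF Y_spD(1)[OF th t0], of 0] by simp
  obtain d1 where d1: "d1 > 0" "\<forall>t\<in>{0..<T}. \<bar>t - t0\<bar> < d1 \<longrightarrow> L2dist_01 (th t) (th t0) < r * e / 2"
    using Y_spD(2)[OF th t0, of "r * e / 2"] e r by auto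
  define d2 where "d2 = r * e / (4 * B + 1)"
  have d2: "d2 > 0" "2 * B * d2 < r * e / 2" using e r B by (simp_all add: d2_def field_simps)
  show "\<exists>d>0. \<forall>x'\<in>{0<..<T} \<times> UNIV. dist x' x < d \<longrightarrow>
    dist ((\<lambda>(t, z). A_eps B e th t (max 0 (min 1 z))) x') ((\<lambda>(t, z). A_eps B e th t (max 0 (min 1 z))) x) < r"
  proof (intro exI[of _ "min d1 d2"] conjI ballI impI)
    fix x' assume x': "x' \<in> {0<..<T} \<times> UNIV" and dx: "dist x' x < min d1 d2"
    obtain t z where x'_eq: "x' = (t, z)" and t: "t \<in> {0..<T}" using x' by fastforce
    have "\<bar>t - t0\<bar> \<le> dist x' x" "\<bar>z - z0\<bar> \<le> dist x' x"
      unfolding x_eq x'_eq dist_Pair_Pair dist_real_def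
      by (auto intro: real_sqrt_sum_squares_ge1 real_sqrt_sum_squares_ge2)
    then have dt: "\<bar>t - t0\<bar> < d1" and dz: "\<bar>z - z0\<bar> < d2" using dx by auto
    let ?c = "\<lambda>z::real. max 0 (min 1 z)"
    have "\<bar>A_eps B e th t (?c z) - A_eps B e th t0 (?c z0)\<bar>
        \<le> (L2dist_01 (th t) (th t0) + 2 * B * \<bar>?c z - ?c z0\<bar>) / e"
      by (rule abs_A_eps_diff_le) (use Y_spD(1)[OF th] t t0 e in auto)
    also have "\<dots> < (r * e / 2 + r * e / 2) / e"
    proof (rule divide_strict_right_mono[OF add_less_le_mono e])
      show "L2dist_01 (th t) (th t0) < r * e / 2" using d1 t dt by simp
      have "2 * B * \<bar>?c z - ?c z0\<bar> \<le> 2 * B * d2" using dz B by (intro mult_left_mono) auto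
      then show "2 * B * \<bar>?c z - ?c z0\<bar> \<le> r * e / 2" using d2(2) by linarith
    qed
    finally show "dist ((\<lambda>(t, z). A_eps B e th t (?c z)) x') ((\<lambda>(t, z). A_eps B e th t (?c z)) x) < r"
      unfolding x_eq x'_eq dist_real_def using e by simp
  qed (use d1 d2 in auto)
qed

lemma A_eps_path_measurable:
  assumes th: "th \<in> Y_sp T B" and e: "e > 0" and g: "g \<in> X_B1 T B1"
  shows "(\<lambda>t. if t \<in> {0<..<T} then A_eps B e th t (g t) else 0) \<in> borel_measurable borel"
proof -
  define \<phi> where "\<phi> x = (if x \<in> {0<..<T} \<times> (UNIV :: real set)
      then (\<lambda>(t, z). A_eps B e th t (max 0 (min 1 z))) x else 0)" for x
  have "\<phi> \<in> borel_measurable borel" unfolding \<phi>_def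
    by (rule borel_measurable_continuous_on_if)
      (use A_eps_clamped_continuous_on[OF th e] in \<open>auto intro!: borel_open open_Times\<close>)
  moreover note X_B1_restrict_measurable[OF g]
  ultimately have "(\<lambda>t. \<phi> (t, if t \<in> {0<..<T} then g t else 0)) \<in> borel_measurable borel"
    by measurable
  moreover have "\<phi> (t, if t \<in> {0<..<T} then g t else 0) = (if t \<in> {0<..<T} then A_eps B e th t (g t) else 0)" for t
    using X_B1D(2,3)[OF g, of t] by (auto simp: \<phi>_def)
  ultimately show ?thesis by simp
qed

lemma continuous_path_measurable:
  fixes Th :: "real \<Rightarrow> real \<Rightarrow> real \<Rightarrow> real"
  assumes Th: "continuous_on UNIV (\<lambda>(w, z, t). Th w z t)" and g: "g \<in> X_B1 T B1"
  shows "(\<lambda>t. if t \<in> {0<..<T} then Th s (g t) t else 0 :: real) \<in> borel_measurable borel"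
proof -
  define TH where "TH = (\<lambda>(w, z, t). Th w z t :: real)"
  define gS where "gS t = (if t \<in> {0<..<T} then g t else 0)" for t
  have "TH \<in> borel_measurable borel"
    unfolding TH_def by (rule borel_measurable_continuous_onI[OF Th])
  moreover have "gS \<in> borel_measurable borel"
    unfolding gS_def by (rule X_B1_restrict_measurable[OF g])
  ultimately have "(\<lambda>t. if t \<in> {0<..<T} then TH (s, gS t, t) else 0) \<in> borel_measurable borel"
    by measurable
  then show ?thesis by (simp add: TH_def gS_def cong: if_cong)
qed

definition H_integrand :: "real \<Rightarrow> (real \<Rightarrow> real) \<Rightarrow> (real \<Rightarrow> real) \<Rightarrow> real \<times> real \<Rightarrow> real" where
  "H_integrand C a b = (\<lambda>(t1, t2). if t1 < t2 then
     max 0 (\<bar>a t2 - a t1 - max 0 (b t2 - b t1)\<bar> - C * (t2 - t1)) else 0)"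

lemma H_eps_eq_integral_H_integrand:
  "H_eps T B3 C \<epsilon> Th th s g =
     integral ({0<..<T} \<times> {0<..<T}) (H_integrand C (\<lambda>t. A_eps B3 \<epsilon> th t (g t)) (\<lambda>t. Th s (g t) t))"
  unfolding H_eps_def H_integrand_def ..

lemma abs_diff_le_sum3:
  fixes x1 x2 x3 y1 y2 y3 :: real
  shows "\<bar>(x1 - x2 - x3) - (y1 - y2 - y3)\<bar> \<le> \<bar>x1 - y1\<bar> + \<bar>x2 - y2\<bar> + \<bar>x3 - y3\<bar>"
proof -
  have "(x1 - x2 - x3) - (y1 - y2 - y3) = (x1 - y1) - (x2 - y2) - (x3 - y3)" by simp
  also have "\<bar>\<dots>\<bar> \<le> \<bar>(x1 - y1) - (x2 - y2)\<bar> + \<bar>x3 - y3\<bar>" by (rule abs_triangle_ineq4)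
  also have "\<bar>(x1 - y1) - (x2 - y2)\<bar> \<le> \<bar>x1 - y1\<bar> + \<bar>x2 - y2\<bar>" by (rule abs_triangle_ineq4)
  finally show ?thesis by simp
qed

lemma abs_max_0_diff_le: "\<bar>max 0 x - max 0 y\<bar> \<le> \<bar>x - y\<bar>" for x y :: real
  by (simp add: max_def abs_if)

lemma H_integrand_diff_le:
  "\<bar>H_integrand C a' b' (t1, t2) - H_integrand C a b (t1, t2)\<bar>
     \<le> (\<bar>a' t1 - a t1\<bar> + \<bar>b' t1 - b t1\<bar>) + (\<bar>a' t2 - a t2\<bar> + \<bar>b' t2 - b t2\<bar>)"
proof -
  let ?u' = "a' t2 - a' t1 - max 0 (b' t2 - b' t1)" and ?u = "a t2 - a t1 - max 0 (b t2 - b t1)"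
  have "\<bar>H_integrand C a' b' (t1, t2) - H_integrand C a b (t1, t2)\<bar> \<le> \<bar>?u' - ?u\<bar>"
  proof (cases "t1 < t2")
    case True
    have "\<bar>max 0 (\<bar>?u'\<bar> - C * (t2 - t1)) - max 0 (\<bar>?u\<bar> - C * (t2 - t1))\<bar> \<le> \<bar>\<bar>?u'\<bar> - \<bar>?u\<bar>\<bar>"
      using abs_max_0_diff_le[of "\<bar>?u'\<bar> - C * (t2 - t1)" "\<bar>?u\<bar> - C * (t2 - t1)"] by simp
    also have "\<dots> \<le> \<bar>?u' - ?u\<bar>" by (rule abs_triangle_ineq3)
    finally show ?thesis using True by (simp only: H_integrand_def case_prod_conv if_True)
  qed (simp add: H_integrand_def)
  also have "\<dots> \<le> \<bar>a' t2 - a t2\<bar> + \<bar>a' t1 - a t1\<bar> + \<bar>max 0 (b' t2 - b' t1) - max 0 (b t2 - b t1)\<bar>"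
    by (rule abs_diff_le_sum3)
  also have "\<bar>max 0 (b' t2 - b' t1) - max 0 (b t2 - b t1)\<bar> \<le> \<bar>(b' t2 - b' t1) - (b t2 - b t1)\<bar>"
    by (rule abs_max_0_diff_le)
  also have "\<dots> \<le> \<bar>b' t2 - b t2\<bar> + \<bar>b' t1 - b t1\<bar>"
    using abs_triangle_ineq4[of "b' t2 - b t2" "b' t1 - b t1"] by (simp add: algebra_simps)
  finally show ?thesis by (simp add: algebra_simps)
qed

lemma H_integrand_measurable:
  fixes a b :: "real \<Rightarrow> real"
  assumes a: "(\<lambda>t. if t \<in> {0<..<T} then a t else 0) \<in> borel_measurable borel"
    and b: "(\<lambda>t. if t \<in> {0<..<T} then b t else 0) \<in> borel_measurable borel"
  shows "H_integrand C a b \<in> borel_measurable (lebesgue_on ({0<..<T} \<times> {0<..<T}))"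
proof -
  let ?S = "{0<..<T::real}"
  define aS where "aS t = (if t \<in> ?S then a t else 0)" for t
  define bS where "bS t = (if t \<in> ?S then b t else 0)" for t
  have [measurable]: "aS \<in> borel_measurable borel" "bS \<in> borel_measurable borel"
    using a b unfolding aS_def bS_def .
  have "H_integrand C aS bS \<in> borel_measurable (borel \<Otimes>\<^sub>M borel)"
    unfolding H_integrand_def by measurable
  then have "H_integrand C aS bS \<in> borel_measurable borel"
    by (simp only: borel_prod)
  then have "H_integrand C aS bS \<in> borel_measurable (lebesgue_on (?S \<times> ?S))"
    by (intro measurable_restrict_space1 measurable_completion) simp
  moreover have "H_integrand C aS bS x = H_integrand C a b x" if x: "x \<in> space (lebesgue_on (?S \<times> ?S))" for x
  proof -
    obtain t1 t2 where "x = (t1, t2)" "t1 \<in> ?S" "t2 \<in> ?S" using x by auto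
    then show ?thesis by (simp only: H_integrand_def aS_def bS_def if_True case_prod_conv)
  qed
  then have "(H_integrand C aS bS \<in> borel_measurable (lebesgue_on (?S \<times> ?S)))
      = (H_integrand C a b \<in> borel_measurable (lebesgue_on (?S \<times> ?S)))"
    by (rule measurable_cong)
  ultimately show ?thesis by simp
qed

lemma abs_H_integrand_le:
  assumes "\<bar>a t1\<bar> \<le> K" "\<bar>a t2\<bar> \<le> K" "\<bar>b t1\<bar> \<le> K" "\<bar>b t2\<bar> \<le> K" and C: "0 \<le> C"
  shows "\<bar>H_integrand C a b (t1, t2)\<bar> \<le> 4 * K"
proof -
  have K: "0 \<le> K" using assms(1) by (intro order_trans[OF abs_ge_zero[of "a t1"]])
  let ?u = "a t2 - a t1 - max 0 (b t2 - b t1)"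
  have "\<bar>?u\<bar> \<le> \<bar>a t2 - a t1\<bar> + \<bar>max 0 (b t2 - b t1)\<bar>" by (rule abs_triangle_ineq4)
  also have "\<dots> \<le> (\<bar>a t2\<bar> + \<bar>a t1\<bar>) + (\<bar>b t2\<bar> + \<bar>b t1\<bar>)"
  proof (rule add_mono[OF abs_triangle_ineq4])
    have "\<bar>max 0 (b t2 - b t1)\<bar> \<le> \<bar>b t2 - b t1\<bar>"
      using abs_max_0_diff_le[of "b t2 - b t1" 0] by simp
    then show "\<bar>max 0 (b t2 - b t1)\<bar> \<le> \<bar>b t2\<bar> + \<bar>b t1\<bar>"
      by (rule order_trans[OF _ abs_triangle_ineq4])
  qed
  also have "\<dots> \<le> 4 * K" using assms(1-4) by simp
  finally have "\<bar>?u\<bar> \<le> 4 * K" .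
  moreover have "t1 < t2 \<Longrightarrow> 0 \<le> C * (t2 - t1)" using C by simp
  ultimately show ?thesis using K by (auto simp: H_integrand_def)
qed

lemma H_integrand_integrable_on:
  fixes a b :: "real \<Rightarrow> real"
  assumes a: "(\<lambda>t. if t \<in> {0<..<T} then a t else 0) \<in> borel_measurable borel"
    and b: "(\<lambda>t. if t \<in> {0<..<T} then b t else 0) \<in> borel_measurable borel"
    and bounded: "\<And>t. t \<in> {0<..<T} \<Longrightarrow> \<bar>a t\<bar> \<le> K \<and> \<bar>b t\<bar> \<le> K"
    and C: "0 \<le> C"
  shows "H_integrand C a b integrable_on ({0<..<T} \<times> {0<..<T})"
proof -
  let ?S = "{0<..<T::real}"
  have SS: "?S \<times> ?S \<in> lmeasurable"
  proof (rule bounded_set_imp_lmeasurable)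
    show "bounded (?S \<times> ?S)" by (intro bounded_Times) simp_all
    show "?S \<times> ?S \<in> sets lebesgue" by (simp add: borel_prod[symmetric])
  qed
  show ?thesis
  proof (rule measurable_bounded_by_integrable_imp_integrable_real
      [OF H_integrand_measurable[OF a b] integrable_on_const[OF SS]])
    show "?S \<times> ?S \<in> sets lebesgue" using SS by (rule fmeasurableD)
    fix x assume "x \<in> ?S \<times> ?S"
    then obtain t1 t2 where "x = (t1, t2)" "t1 \<in> ?S" "t2 \<in> ?S" by auto
    then show "\<bar>H_integrand C a b x\<bar> \<le> 4 * K"
      using bounded abs_H_integrand_le[OF _ _ _ _ C] by simp
  qed
qed

lemma measure_lebesgue_Times_real:
  fixes A B :: "real set"
  assumes A: "A \<in> sets borel" and B: "B \<in> sets borel"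
  shows "measure lebesgue (A \<times> B) = measure lebesgue A * measure lebesgue B"
proof -
  have "A \<times> B \<in> sets (borel :: (real \<times> real) measure)"
    using A B by (simp add: borel_prod[symmetric])
  then have "measure lebesgue (A \<times> B) = measure (lborel \<Otimes>\<^sub>M lborel) (A \<times> B)"
    by (simp add: lborel_prod)
  also have "\<dots> = measure lborel A * measure lborel B"
    unfolding measure_def using A B by (simp add: lborel.emeasure_pair_measure_Times enn2real_mult)
  also have "\<dots> = measure lebesgue A * measure lebesgue B"
    using A B by simp
  finally show ?thesis .
qed

lemma has_integral_indicator_Times_real:
  fixes A B U V :: "real set"
  assumes "A \<in> sets borel" "B \<in> sets borel" "U \<in> sets borel" "V \<in> sets borel" "bounded U" "bounded V"
  shows "(indicat_real (A \<times> B) has_integral measure lebesgue (A \<inter> U) * measure lebesgue (B \<inter> V)) (U \<times> V)"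
proof -
  have eq: "(A \<times> B) \<inter> (U \<times> V) = (A \<inter> U) \<times> (B \<inter> V)" by auto
  have "(A \<inter> U) \<times> (B \<inter> V) \<in> lmeasurable"
  proof (rule bounded_set_imp_lmeasurable)
    show "bounded ((A \<inter> U) \<times> (B \<inter> V))"
      using assms(5,6) by (intro bounded_Times) (auto intro: bounded_subset)
    show "(A \<inter> U) \<times> (B \<inter> V) \<in> sets lebesgue"
      using assms(1-4) by (simp add: borel_prod[symmetric])
  qed
  then have "(A \<times> B) \<inter> (U \<times> V) \<in> lmeasurable" unfolding eq .
  then show ?thesis
    using integrable_on_indicator integral_indicator
      measure_lebesgue_Times_real[of "A \<inter> U" "B \<inter> V"] assms(1-4) eq
    by (metis has_integral_integral sets.Int)
qed

lemma integral_diff_le_of_separable_bound: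
  fixes F F' :: "real \<times> real \<Rightarrow> real" and N :: "real set" and T :: real
  defines "S \<equiv> {0<..<T}"
  assumes T: "0 < T" and F: "F integrable_on S \<times> S" and F': "F' integrable_on S \<times> S"
    and N: "N \<in> sets borel" and r: "0 \<le> r" and K: "0 \<le> K"
    and FF': "\<And>t1 t2. t1 \<in> S \<Longrightarrow> t2 \<in> S \<Longrightarrow> \<bar>F' (t1, t2) - F (t1, t2)\<bar> \<le> D t1 + D t2"
    and D: "\<And>t. t \<in> S \<Longrightarrow> D t \<le> r + K * indicator N t"
  shows "\<bar>integral (S \<times> S) F' - integral (S \<times> S) F\<bar> \<le> 2 * r * T\<^sup>2 + 2 * K * T * measure lebesgue (N \<inter> S)"
proof -
  have S: "S \<in> sets borel" "bounded S" "measure lebesgue S = T"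
    using T by (auto simp: S_def)
  define G where "G x = 2 * r + K * indicator (N \<times> UNIV) x + K * indicator (UNIV \<times> N) x"
    for x :: "real \<times> real"
  have "(G has_integral 2 * r * (measure lebesgue S * measure lebesgue S)
      + K * (measure lebesgue (N \<inter> S) * measure lebesgue (UNIV \<inter> S))
      + K * (measure lebesgue (UNIV \<inter> S) * measure lebesgue (N \<inter> S))) (S \<times> S)"
    unfolding G_def
  proof (intro has_integral_add has_integral_mult_right)
    show "((\<lambda>x. 2 * r) has_integral 2 * r * (measure lebesgue S * measure lebesgue S)) (S \<times> S)"
      using has_integral_mult_right[OF has_integral_indicator_Times_real[of UNIV UNIV S S], of "2 * r"] S(1,2)
      by simp
  qed (use has_integral_indicator_Times_real[of N UNIV S S] has_integral_indicator_Times_real[of UNIV N S S]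
      N S(1,2) in auto)
  then have G: "(G has_integral 2 * r * T\<^sup>2 + 2 * K * T * measure lebesgue (N \<inter> S)) (S \<times> S)"
    using S(3) by (simp add: power2_eq_square algebra_simps)
  have "\<bar>F' x - F x\<bar> \<le> G x" if x: "x \<in> S \<times> S" for x
  proof -
    obtain t1 t2 where x: "x = (t1, t2)" and t: "t1 \<in> S" "t2 \<in> S" using x by auto
    have "\<bar>F' x - F x\<bar> \<le> (r + K * indicator N t1) + (r + K * indicator N t2)"
      using FF'[OF t] D[OF t(1)] D[OF t(2)] unfolding x by linarith
    then show ?thesis by (simp add: G_def x indicator_def)
  qed
  then have "norm (integral (S \<times> S) (\<lambda>x. F' x - F x)) \<le> integral (S \<times> S) G"
    using integrable_diff[OF F' F] G by (intro integral_norm_bound_integral) auto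
  then show ?thesis
    using integral_diff[OF F' F] integral_unique[OF G] by simp
qed

lemma X_B1_deviation_set_borel:
  assumes "g \<in> X_B1 T B1" "g' \<in> X_B1 T B1"
  shows "{t \<in> {0<..<T}. \<delta> \<le> \<bar>g' t - g t\<bar>} \<in> sets borel"
proof -
  have [measurable]: "(\<lambda>t. if t \<in> {0<..<T} then g t else 0) \<in> borel_measurable borel"
    "(\<lambda>t. if t \<in> {0<..<T} then g' t else 0) \<in> borel_measurable borel"
    using X_B1_restrict_measurable assms by auto
  have "{t \<in> {0<..<T}. \<delta> \<le> \<bar>g' t - g t\<bar>}
      = {t. \<delta> \<le> \<bar>(if t \<in> {0<..<T} then g' t else 0) - (if t \<in> {0<..<T} then g t else 0)\<bar>} \<inter> {0<..<T}"
    by auto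
  also have "\<dots> \<in> sets borel" by measurable
  finally show ?thesis .
qed

lemma L2dist_X:
  assumes g: "g \<in> X_B1 T B1" and g': "g' \<in> X_B1 T B1"
  shows "(\<lambda>t. (g' t - g t)\<^sup>2) integrable_on {0<..<T}"
    and "integral {0<..<T} (\<lambda>t. (g' t - g t)\<^sup>2) = (L2dist_X T g' g)\<^sup>2"
    and "0 \<le> L2dist_X T g' g"
proof -
  let ?S = "{0<..<T::real}"
  show sq_int: "(\<lambda>t. (g' t - g t)\<^sup>2) integrable_on ?S"
  proof (rule measurable_bounded_by_integrable_imp_integrable_real[OF _ integrable_on_const[of ?S 1]])
    define gS where "gS h t = (if t \<in> ?S then h t else 0)" for h :: "real \<Rightarrow> real" and t
    have [measurable]: "gS g \<in> borel_measurable borel" "gS g' \<in> borel_measurable borel"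
      unfolding gS_def using X_B1_restrict_measurable g g' by auto
    have "(\<lambda>t. (gS g' t - gS g t)\<^sup>2) \<in> borel_measurable (lebesgue_on ?S)"
      by (intro measurable_restrict_space1 measurable_completion) simp
    moreover have "(gS g' t - gS g t)\<^sup>2 = (g' t - g t)\<^sup>2" if "t \<in> space (lebesgue_on ?S)" for t
      using that by (simp add: gS_def)
    then have "((\<lambda>t. (gS g' t - gS g t)\<^sup>2) \<in> borel_measurable (lebesgue_on ?S))
        = ((\<lambda>t. (g' t - g t)\<^sup>2) \<in> borel_measurable (lebesgue_on ?S))"
      by (rule measurable_cong)
    ultimately show "(\<lambda>t. (g' t - g t)\<^sup>2) \<in> borel_measurable (lebesgue_on ?S)"
      by simp
    fix t assume t: "t \<in> ?S"
    have "\<bar>g' t - g t\<bar> \<le> 1" using X_B1D(2,3)[OF g t] X_B1D(2,3)[OF g' t] by linarith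
    then show "\<bar>(g' t - g t)\<^sup>2\<bar> \<le> 1" using power_mono[of "\<bar>g' t - g t\<bar>" 1 2] by simp
  qed auto
  then show "integral ?S (\<lambda>t. (g' t - g t)\<^sup>2) = (L2dist_X T g' g)\<^sup>2" "0 \<le> L2dist_X T g' g"
    using integral_nonneg[OF sq_int] by (simp_all add: L2dist_X_def)
qed

lemma X_B1_deviation_measure_le:
  assumes g: "g \<in> X_B1 T B1" and g': "g' \<in> X_B1 T B1" and \<delta>: "0 < \<delta>"
  shows "\<delta>\<^sup>2 * measure lebesgue {t \<in> {0<..<T}. \<delta> \<le> \<bar>g' t - g t\<bar>} \<le> (L2dist_X T g' g)\<^sup>2"
proof -
  let ?S = "{0<..<T::real}" and ?N = "{t \<in> {0<..<T}. \<delta> \<le> \<bar>g' t - g t\<bar>}"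
  have sq_int: "(\<lambda>t. (g' t - g t)\<^sup>2) integrable_on ?S" by (rule L2dist_X(1)[OF g g'])
  have N: "?N \<in> lmeasurable"
  proof (rule bounded_set_imp_lmeasurable)
    show "bounded ?N" by (rule bounded_subset[of ?S]) auto
  qed (use X_B1_deviation_set_borel[OF g g'] in simp)
  have NS: "?N \<inter> ?S = ?N" by auto
  have ind: "indicat_real ?N integrable_on ?S"
    using N integrable_on_indicator[of ?N ?S] unfolding NS by simp
  have "\<delta>\<^sup>2 * measure lebesgue ?N = integral ?S (\<lambda>t. \<delta>\<^sup>2 * indicator ?N t)"
    using integral_indicator[of ?N ?S] N unfolding NS by simp
  also have "\<dots> \<le> integral ?S (\<lambda>t. (g' t - g t)\<^sup>2)"
  proof (rule Henstock_Kurzweil_Integration.integral_le[OF _ sq_int])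
    show "(\<lambda>t. \<delta>\<^sup>2 * indicator ?N t) integrable_on ?S"
      using integrable_on_cmult_left[OF ind, of "\<delta>\<^sup>2"] by simp
  next
    fix t assume "t \<in> ?S"
    show "\<delta>\<^sup>2 * indicator ?N t \<le> (g' t - g t)\<^sup>2"
    proof (cases "t \<in> ?N")
      case True
      then have "\<delta>\<^sup>2 \<le> \<bar>g' t - g t\<bar>\<^sup>2" using \<delta> by (intro power_mono) auto
      then show ?thesis using True by simp
    qed simp
  qed
  also have "\<dots> = (L2dist_X T g' g)\<^sup>2" by (rule L2dist_X(2)[OF g g'])
  finally show ?thesis .
qed

lemma A_eps_path_diff_le:
  assumes th: "th \<in> Y_sp T B" and th': "th' \<in> Y_sp T B" and g: "g \<in> X_B1 T B1" and g': "g' \<in> X_B1 T B1"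
    and t: "t \<in> {0<..<T}" and e: "0 < e"
  shows "\<bar>A_eps B e th' t (g' t) - A_eps B e th t (g t)\<bar> \<le> (dist_Y T th' th + 2 * B * \<bar>g' t - g t\<bar>) / e"
proof -
  have t0: "t \<in> {0..<T}" using t by simp
  have "\<bar>A_eps B e th' t (g' t) - A_eps B e th t (g t)\<bar>
      \<le> (L2dist_01 (th' t) (th t) + 2 * B * \<bar>g' t - g t\<bar>) / e"
    by (rule abs_A_eps_diff_le) (use Y_spD(1)[OF th' t0] Y_spD(1)[OF th t0] X_B1D(2)[OF g t] X_B1D(2)[OF g' t] e in auto)
  also have "\<dots> \<le> (dist_Y T th' th + 2 * B * \<bar>g' t - g t\<bar>) / e"
    using L2dist_01_le_dist_Y[OF th' th t0] e by (simp add: divide_right_mono)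
  finally show ?thesis .
qed

lemma H_integrand_path_integrable_on:
  fixes Th :: "real \<Rightarrow> real \<Rightarrow> real \<Rightarrow> real"
  assumes th: "th \<in> Y_sp T B3" and g: "g \<in> X_B1 T B1"
    and Th: "continuous_on UNIV (\<lambda>(w, z, t). Th w z t)" and \<epsilon>: "0 < \<epsilon>" and C: "0 \<le> C"
    and M: "\<And>t. t \<in> {0<..<T} \<Longrightarrow> \<bar>Th s (g t) t\<bar> \<le> M"
  shows "H_integrand C (\<lambda>t. A_eps B3 \<epsilon> th t (g t)) (\<lambda>t. Th s (g t) t) integrable_on {0<..<T} \<times> {0<..<T}"
proof (rule H_integrand_integrable_on[where K = "max B3 M", OF A_eps_path_measurable[OF th \<epsilon> g]
      continuous_path_measurable[OF Th g] _ C])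
  fix t assume t: "t \<in> {0<..<T}"
  then have "\<bar>A_eps B3 \<epsilon> th t (g t)\<bar> \<le> B3"
    using \<epsilon> by (intro abs_A_eps_le Y_spD(1)[OF th] X_B1D(2)[OF g]) auto
  then show "\<bar>A_eps B3 \<epsilon> th t (g t)\<bar> \<le> max B3 M \<and> \<bar>Th s (g t) t\<bar> \<le> max B3 M"
    using M[OF t] by (simp add: le_max_iff_disj)
qed

lemma H_eps_diff_le:
  fixes Th :: "real \<Rightarrow> real \<Rightarrow> real \<Rightarrow> real"
  assumes T: "0 < T" and th: "th \<in> Y_sp T B3" and th': "th' \<in> Y_sp T B3"
    and g: "g \<in> X_B1 T B1" and g': "g' \<in> X_B1 T B1"
    and Th: "continuous_on UNIV (\<lambda>(w, z, t). Th w z t)" and \<epsilon>: "0 < \<epsilon>" and C: "0 \<le> C"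
    and \<delta>: "0 < \<delta>" and r: "0 \<le> r"
    and M: "\<And>t. t \<in> {0<..<T} \<Longrightarrow> \<bar>Th s (g t) t\<bar> \<le> M \<and> \<bar>Th s' (g' t) t\<bar> \<le> M"
    and close: "\<And>t. t \<in> {0<..<T} \<Longrightarrow> \<bar>g' t - g t\<bar> < \<delta> \<Longrightarrow>
      \<bar>A_eps B3 \<epsilon> th' t (g' t) - A_eps B3 \<epsilon> th t (g t)\<bar> + \<bar>Th s' (g' t) t - Th s (g t) t\<bar> \<le> r"
  shows "\<bar>H_eps T B3 C \<epsilon> Th th' s' g' - H_eps T B3 C \<epsilon> Th th s g\<bar>
           \<le> 2 * r * T\<^sup>2 + 2 * (2 * B3 + 2 * M) * T * (L2dist_X T g' g)\<^sup>2 / \<delta>\<^sup>2"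
proof -
  let ?S = "{0<..<T}" and ?N = "{t \<in> {0<..<T}. \<delta> \<le> \<bar>g' t - g t\<bar>}"
  define a where "a t = A_eps B3 \<epsilon> th t (g t)" for t
  define a' where "a' t = A_eps B3 \<epsilon> th' t (g' t)" for t
  define b where "b t = Th s (g t) t" for t
  define b' where "b' t = Th s' (g' t) t" for t
  have A: "\<bar>a t\<bar> \<le> B3" "\<bar>a' t\<bar> \<le> B3" if "t \<in> ?S" for t
    unfolding a_def a'_def using that \<epsilon>
    by (auto intro!: abs_A_eps_le Y_spD(1)[OF th] Y_spD(1)[OF th'] X_B1D(2)[OF g] X_B1D(2)[OF g'])
  have t_half: "T / 2 \<in> ?S" using T by simp
  have K: "0 \<le> 2 * B3 + 2 * M"
    using order_trans[OF abs_ge_zero A(1)[OF t_half]] order_trans[OF abs_ge_zero conjunct1[OF M[OF t_half]]]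
    by simp
  have F: "H_integrand C a b integrable_on ?S \<times> ?S"
    unfolding a_def b_def using M by (intro H_integrand_path_integrable_on[OF th g Th \<epsilon> C]) blast
  have F': "H_integrand C a' b' integrable_on ?S \<times> ?S"
    unfolding a'_def b'_def using M by (intro H_integrand_path_integrable_on[OF th' g' Th \<epsilon> C]) blast
  have D_bound: "\<bar>a' t - a t\<bar> + \<bar>b' t - b t\<bar> \<le> r + (2 * B3 + 2 * M) * indicator ?N t"
    if t: "t \<in> ?S" for t
  proof (cases "t \<in> ?N")
    case True
    have "\<bar>a' t - a t\<bar> + \<bar>b' t - b t\<bar> \<le> (\<bar>a' t\<bar> + \<bar>a t\<bar>) + (\<bar>b' t\<bar> + \<bar>b t\<bar>)"
      by (intro add_mono abs_triangle_ineq4)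
    also have "\<dots> \<le> 2 * B3 + 2 * M" using A[OF t] M[OF t] by (simp add: b_def b'_def)
    finally show ?thesis using True r by simp
  next
    case False
    then show ?thesis using close[OF t] t by (simp add: a_def a'_def b_def b'_def)
  qed
  have "\<bar>integral (?S \<times> ?S) (H_integrand C a' b') - integral (?S \<times> ?S) (H_integrand C a b)\<bar>
      \<le> 2 * r * T\<^sup>2 + 2 * (2 * B3 + 2 * M) * T * measure lebesgue (?N \<inter> ?S)"
    by (rule integral_diff_le_of_separable_bound[OF T F F' X_B1_deviation_set_borel[OF g g'] r K,
          where D = "\<lambda>t. \<bar>a' t - a t\<bar> + \<bar>b' t - b t\<bar>"])
      (use H_integrand_diff_le D_bound in auto)
  also have "?N \<inter> ?S = ?N" by auto
  also have "measure lebesgue ?N \<le> (L2dist_X T g' g)\<^sup>2 / \<delta>\<^sup>2"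
    using X_B1_deviation_measure_le[OF g g' \<delta>] \<delta> by (simp add: field_simps)
  finally show ?thesis
    using K T by (simp add: H_eps_eq_integral_H_integrand a_def a'_def b_def b'_def mult_left_mono)
qed

lemma continuous_on_bounded_uniformly_near:
  fixes Th :: "real \<Rightarrow> real \<Rightarrow> real \<Rightarrow> real"
  assumes Th: "continuous_on UNIV (\<lambda>(w, z, t). Th w z t)" and \<rho>: "0 < \<rho>"
  obtains M \<eta> where "0 < \<eta>" "\<eta> \<le> 1"
    and "\<And>s' z t. \<bar>s' - s\<bar> \<le> 1 \<Longrightarrow> z \<in> {0..1} \<Longrightarrow> t \<in> {0..T} \<Longrightarrow> \<bar>Th s' z t\<bar> \<le> M"
    and "\<And>s' z z' t. \<bar>s' - s\<bar> + \<bar>z' - z\<bar> < \<eta> \<Longrightarrow> z \<in> {0..1} \<Longrightarrow> z' \<in> {0..1} \<Longrightarrow> t \<in> {0..T} \<Longrightarrow>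
           \<bar>Th s' z' t - Th s z t\<bar> < \<rho>"
proof -
  let ?Th = "\<lambda>(w, z, t). Th w z t" and ?K = "{s - 1..s + 1} \<times> {0..1::real} \<times> {0..T}"
  have K: "compact ?K" by (intro compact_Times compact_Icc)
  have cont: "continuous_on ?K ?Th" by (rule continuous_on_subset[OF Th subset_UNIV])
  have "bounded (?Th ` ?K)" by (rule compact_imp_bounded[OF compact_continuous_image[OF cont K]])
  then obtain M where M: "\<forall>x\<in>?K. \<bar>?Th x\<bar> \<le> M" unfolding bounded_real by auto
  obtain \<eta> where \<eta>: "0 < \<eta>" "\<forall>x\<in>?K. \<forall>x'\<in>?K. dist x' x < \<eta> \<longrightarrow> dist (?Th x') (?Th x) < \<rho>"
    using compact_uniformly_continuous[OF cont K] \<rho> unfolding uniformly_continuous_on_def by metis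
  show ?thesis
  proof
    show "\<bar>Th s' z t\<bar> \<le> M" if "\<bar>s' - s\<bar> \<le> 1" "z \<in> {0..1}" "t \<in> {0..T}" for s' z t
    proof -
      have "(s', z, t) \<in> ?K" using that by (simp add: abs_le_iff)
      then show ?thesis using M by fastforce
    qed
    show "\<bar>Th s' z' t - Th s z t\<bar> < \<rho>"
      if close: "\<bar>s' - s\<bar> + \<bar>z' - z\<bar> < min \<eta> 1" and "z \<in> {0..1}" "z' \<in> {0..1}" "t \<in> {0..T}" for s' z z' t
    proof -
      have "dist (s', z', t) (s, z, t) \<le> dist (s', z', t) (s, z', t) + dist (s, z', t) (s, z, t)"
        by (rule dist_triangle)
      also have "\<dots> = \<bar>s' - s\<bar> + \<bar>z' - z\<bar>" by (simp add: dist_Pair_Pair dist_real_def)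
      finally have "dist (s', z', t) (s, z, t) < \<eta>" using close by linarith
      moreover have "\<bar>s' - s\<bar> \<le> 1" using close abs_ge_zero[of "z' - z"] by linarith
      then have "(s', z', t) \<in> ?K" "(s, z, t) \<in> ?K" using that by (simp_all add: abs_le_iff)
      ultimately have "dist (?Th (s', z', t)) (?Th (s, z, t)) < \<rho>" using \<eta>(2) by blast
      then show ?thesis by (simp add: dist_real_def)
    qed
  qed (use \<eta> in auto)
qed

lemma error_budget:
  fixes T K \<delta> L d e :: real
  assumes "0 \<le> K" "0 < \<delta>" "0 \<le> L" "L < d" "d \<le> 1" "d \<le> \<delta>\<^sup>2 * e / (4 * K * T + 4)" "0 < T" "0 < e"
  shows "2 * (2 * (e / (8 * T\<^sup>2 + 8))) * T\<^sup>2 + 2 * K * T * L\<^sup>2 / \<delta>\<^sup>2 < e"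
proof -
  have KT: "0 < 4 * K * T + 4" using assms(1,7) by (simp add: add_nonneg_pos)
  have "L\<^sup>2 < d\<^sup>2" using power_strict_mono[of L d 2] assms(3,4) by simp
  also have "\<dots> \<le> d" using assms(3-5) by (simp add: power2_eq_square mult_left_le)
  finally have "L\<^sup>2 \<le> d" by simp
  then have "L\<^sup>2 / \<delta>\<^sup>2 \<le> e / (4 * K * T + 4)"
    using assms(2,6) by (simp add: divide_le_eq mult.commute pos_le_divide_eq)
  then have "2 * K * T * L\<^sup>2 / \<delta>\<^sup>2 \<le> 2 * K * T * (e / (4 * K * T + 4))"
    using assms(1,7) by (simp add: mult_left_mono times_divide_eq_right[symmetric] del: times_divide_eq_right)
  also have "\<dots> < e / 2"
    using KT assms(8) by (simp add: field_simps)
  finally have "2 * K * T * L\<^sup>2 / \<delta>\<^sup>2 < e / 2" .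
  moreover have "2 * (2 * (e / (8 * T\<^sup>2 + 8))) * T\<^sup>2 < e / 2"
  proof -
    have pos: "0 < 8 * T\<^sup>2 + 8" using zero_le_power2[of T] by linarith
    have "2 * (2 * (e / (8 * T\<^sup>2 + 8))) * T\<^sup>2 * (8 * T\<^sup>2 + 8) = 4 * e * T\<^sup>2"
      using pos by simp
    also have "\<dots> < e / 2 * (8 * T\<^sup>2 + 8)" using assms(8) by (simp add: algebra_simps)
    finally show ?thesis using mult_less_cancel_right_pos[OF pos] by blast
  qed
  ultimately show ?thesis by linarith
qed

lemma A_eps_Th_paths_close:
  fixes Th :: "real \<Rightarrow> real \<Rightarrow> real \<Rightarrow> real"
  assumes B3: "0 < B3" and \<epsilon>: "0 < \<epsilon>" and Th: "continuous_on UNIV (\<lambda>(w, z, t). Th w z t)"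
    and th: "th \<in> Y_sp T B3" and g: "g \<in> X_B1 T B1" and \<rho>: "0 < \<rho>"
  obtains M \<kappa> where "0 < \<kappa>" "\<kappa> \<le> 1"
    and "\<And>s' g' t. g' \<in> X_B1 T B1 \<Longrightarrow> t \<in> {0<..<T} \<Longrightarrow> \<bar>s' - s\<bar> \<le> 1 \<Longrightarrow>
           \<bar>Th s (g t) t\<bar> \<le> M \<and> \<bar>Th s' (g' t) t\<bar> \<le> M"
    and "\<And>th' s' g' t. th' \<in> Y_sp T B3 \<Longrightarrow> g' \<in> X_B1 T B1 \<Longrightarrow> t \<in> {0<..<T} \<Longrightarrow>
           dist_Y T th' th < \<kappa> \<Longrightarrow> \<bar>s' - s\<bar> < \<kappa> \<Longrightarrow> \<bar>g' t - g t\<bar> < \<kappa> \<Longrightarrow>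
           \<bar>A_eps B3 \<epsilon> th' t (g' t) - A_eps B3 \<epsilon> th t (g t)\<bar> + \<bar>Th s' (g' t) t - Th s (g t) t\<bar> \<le> 2 * \<rho>"
proof -
  obtain M \<eta> where \<eta>: "0 < \<eta>" "\<eta> \<le> 1"
    and M: "\<And>s' z t. \<bar>s' - s\<bar> \<le> 1 \<Longrightarrow> z \<in> {0..1} \<Longrightarrow> t \<in> {0..T} \<Longrightarrow> \<bar>Th s' z t\<bar> \<le> M"
    and Th_close: "\<And>s' z z' t. \<bar>s' - s\<bar> + \<bar>z' - z\<bar> < \<eta> \<Longrightarrow> z \<in> {0..1} \<Longrightarrow> z' \<in> {0..1} \<Longrightarrow>
           t \<in> {0..T} \<Longrightarrow> \<bar>Th s' z' t - Th s z t\<bar> < \<rho>"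
    using continuous_on_bounded_uniformly_near[OF Th \<rho>] by metis
  define \<kappa> where "\<kappa> = min (\<eta> / 2) (\<rho> * \<epsilon> / (2 * B3 + 1))"
  have "(2 * B3 + 1) * \<kappa> \<le> (2 * B3 + 1) * (\<rho> * \<epsilon> / (2 * B3 + 1))"
    using B3 by (intro mult_left_mono) (auto simp: \<kappa>_def)
  moreover have "\<kappa> \<le> \<eta> / 2" unfolding \<kappa>_def by (rule min.cobounded1)
  ultimately have \<kappa>: "0 < \<kappa>" "\<kappa> \<le> \<eta> / 2" "(2 * B3 + 1) * \<kappa> \<le> \<rho> * \<epsilon>"
    using \<eta> \<rho> \<epsilon> B3 by (simp_all add: \<kappa>_def)
  have X: "g t \<in> {0..1}" "g' t \<in> {0..1}" "t \<in> {0..T}" if "g' \<in> X_B1 T B1" "t \<in> {0<..<T}" for g' t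
    using X_B1D(2,3)[OF g that(2)] X_B1D(2,3)[OF that] that(2) by auto
  show ?thesis
  proof
    show "0 < \<kappa>" "\<kappa> \<le> 1" using \<kappa> \<eta> by auto
    show "\<bar>Th s (g t) t\<bar> \<le> M \<and> \<bar>Th s' (g' t) t\<bar> \<le> M"
      if "g' \<in> X_B1 T B1" "t \<in> {0<..<T}" "\<bar>s' - s\<bar> \<le> 1" for s' g' t
      using M[of s] M[of s'] X[OF that(1,2)] that(3) by simp
    fix th' s' g' t
    assume th': "th' \<in> Y_sp T B3" and g': "g' \<in> X_B1 T B1" and t: "t \<in> {0<..<T}"
      and near: "dist_Y T th' th < \<kappa>" "\<bar>s' - s\<bar> < \<kappa>" "\<bar>g' t - g t\<bar> < \<kappa>"
    have "\<bar>A_eps B3 \<epsilon> th' t (g' t) - A_eps B3 \<epsilon> th t (g t)\<bar> \<le> (dist_Y T th' th + 2 * B3 * \<bar>g' t - g t\<bar>) / \<epsilon>"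
      by (rule A_eps_path_diff_le[OF th th' g g' t \<epsilon>])
    also have "\<dots> \<le> (2 * B3 + 1) * \<kappa> / \<epsilon>"
      using near B3 \<epsilon> by (intro divide_right_mono) (auto simp: algebra_simps intro: add_mono mult_left_mono)
    also have "\<dots> \<le> \<rho>" using \<kappa>(3) \<epsilon> by (simp add: pos_divide_le_eq)
    finally have "\<bar>A_eps B3 \<epsilon> th' t (g' t) - A_eps B3 \<epsilon> th t (g t)\<bar> \<le> \<rho>" .
    moreover have "\<bar>Th s' (g' t) t - Th s (g t) t\<bar> < \<rho>"
      using near \<kappa>(2) by (intro Th_close[OF _ X[OF g' t]]) linarith
    ultimately show "\<bar>A_eps B3 \<epsilon> th' t (g' t) - A_eps B3 \<epsilon> th t (g t)\<bar> + \<bar>Th s' (g' t) t - Th s (g t) t\<bar> \<le> 2 * \<rho>"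
      by linarith
  qed
qed

lemma H_eps_continuous:
  fixes Th :: "real \<Rightarrow> real \<Rightarrow> real \<Rightarrow> real"
  assumes T: "0 < T" and B3: "0 < B3" and C: "0 \<le> C" and \<epsilon>: "0 < \<epsilon>"
    and Th: "continuous_on UNIV (\<lambda>(w, z, t). Th w z t)"
    and th: "th \<in> Y_sp T B3" and g: "g \<in> X_B1 T B1" and e: "0 < e"
  shows "\<exists>d>0. \<forall>th'\<in>Y_sp T B3. \<forall>s'. \<forall>g'\<in>X_B1 T B1.
           dist_Y T th' th < d \<and> \<bar>s' - s\<bar> < d \<and> L2dist_X T g' g < d \<longrightarrow>
           \<bar>H_eps T B3 C \<epsilon> Th th' s' g' - H_eps T B3 C \<epsilon> Th th s g\<bar> < e"
proof -
  define \<rho> where "\<rho> = e / (8 * T\<^sup>2 + 8)"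
  have \<rho>: "0 < \<rho>" unfolding \<rho>_def using e zero_le_power2[of T] by (intro divide_pos_pos) linarith+
  obtain M \<kappa> where \<kappa>: "0 < \<kappa>" "\<kappa> \<le> 1"
    and M: "\<And>s' g' t. g' \<in> X_B1 T B1 \<Longrightarrow> t \<in> {0<..<T} \<Longrightarrow> \<bar>s' - s\<bar> \<le> 1 \<Longrightarrow>
           \<bar>Th s (g t) t\<bar> \<le> M \<and> \<bar>Th s' (g' t) t\<bar> \<le> M"
    and close: "\<And>th' s' g' t. th' \<in> Y_sp T B3 \<Longrightarrow> g' \<in> X_B1 T B1 \<Longrightarrow> t \<in> {0<..<T} \<Longrightarrow>
           dist_Y T th' th < \<kappa> \<Longrightarrow> \<bar>s' - s\<bar> < \<kappa> \<Longrightarrow> \<bar>g' t - g t\<bar> < \<kappa> \<Longrightarrow>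
           \<bar>A_eps B3 \<epsilon> th' t (g' t) - A_eps B3 \<epsilon> th t (g t)\<bar> + \<bar>Th s' (g' t) t - Th s (g t) t\<bar> \<le> 2 * \<rho>"
    using A_eps_Th_paths_close[OF B3 \<epsilon> Th th g \<rho>] by metis
  define K where "K = 2 * B3 + 2 * M"
  have K: "0 \<le> K" using M[OF g, of "T / 2" s] T B3 by (simp add: K_def)
  define d where "d = min \<kappa> (\<kappa>\<^sup>2 * e / (4 * K * T + 4))"
  have d: "0 < d" "d \<le> \<kappa>" "d \<le> \<kappa>\<^sup>2 * e / (4 * K * T + 4)"
    using \<kappa> e K T by (simp_all add: d_def add_nonneg_pos)
  show ?thesis
  proof (intro exI[of _ d] conjI ballI allI impI d(1))
    fix th' s' g' assume th': "th' \<in> Y_sp T B3" and g': "g' \<in> X_B1 T B1"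
      and near: "dist_Y T th' th < d \<and> \<bar>s' - s\<bar> < d \<and> L2dist_X T g' g < d"
    have s': "\<bar>s' - s\<bar> \<le> 1" using near d(2) \<kappa>(2) by linarith
    have "\<bar>H_eps T B3 C \<epsilon> Th th' s' g' - H_eps T B3 C \<epsilon> Th th s g\<bar>
        \<le> 2 * (2 * \<rho>) * T\<^sup>2 + 2 * K * T * (L2dist_X T g' g)\<^sup>2 / \<kappa>\<^sup>2"
      unfolding K_def
    proof (rule H_eps_diff_le[OF T th th' g g' Th \<epsilon> C \<kappa>(1)])
      show "0 \<le> 2 * \<rho>" using \<rho> by simp
      show "\<bar>Th s (g t) t\<bar> \<le> M \<and> \<bar>Th s' (g' t) t\<bar> \<le> M" if "t \<in> {0<..<T}" for t
        by (rule M[OF g' that s'])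
      show "\<bar>A_eps B3 \<epsilon> th' t (g' t) - A_eps B3 \<epsilon> th t (g t)\<bar> + \<bar>Th s' (g' t) t - Th s (g t) t\<bar> \<le> 2 * \<rho>"
        if "t \<in> {0<..<T}" "\<bar>g' t - g t\<bar> < \<kappa>" for t
        using near d(2) that by (intro close[OF th' g']) auto
    qed
    also have "\<dots> < e"
      unfolding \<rho>_def
      by (rule error_budget[OF K \<kappa>(1) L2dist_X(3)[OF g g'] _ _ d(3) T e]) (use near d(2) \<kappa>(2) in auto)
    finally show "\<bar>H_eps T B3 C \<epsilon> Th th' s' g' - H_eps T B3 C \<epsilon> Th th s g\<bar> < e" .
  qed
qed

theorem lemma6p13:
  fixes T B1 B3 C \<epsilon> :: real
    and Qsat Th :: "real \<Rightarrow> real \<Rightarrow> real \<Rightarrow> real"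
  assumes "T > 0" "B1 > 0" "B3 > 0" "C > 0" "\<epsilon> > 0"
    and "smooth_fn (\<lambda>(x, y, z). Qsat x y z)"
    and "\<forall>x y z. \<exists>D>0. ((\<lambda>u. Qsat u y z) has_real_derivative D) (at x)"
    and "\<forall>x y z. \<exists>D<0. ((\<lambda>u. Qsat x u z) has_real_derivative D) (at y)"
    and "\<forall>w z t. Th w z t + Qsat (Th w z t) z t = w"
    and "smooth_fn (\<lambda>(w, z, t). Th w z t)"
  shows "\<forall>th\<in>Y_sp T B3. \<forall>s. \<forall>g\<in>X_B1 T B1. \<forall>e>0. \<exists>d>0.
           \<forall>th'\<in>Y_sp T B3. \<forall>s'. \<forall>g'\<in>X_B1 T B1.
             dist_Y T th' th < d \<and> \<bar>s' - s\<bar> < d \<and> L2dist_X T g' g < d \<longrightarrow>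
             \<bar>H_eps T B3 C \<epsilon> Th th' s' g' - H_eps T B3 C \<epsilon> Th th s g\<bar> < e"
  using H_eps_continuous[OF assms(1,3) less_imp_le[OF assms(4)] assms(5) smooth_fn_continuous[OF assms(10)]]
  by blast

end
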